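(* In a monotonous quiver, the property of a vertex of being phylogenetic is anti-hereditary: every ancestor of a phylogenetic vertex is phylogenetic.
   Context: A quiver consists of a class of vertices and, for each ordered pair of vertices $(A,B)$, a set of edges $A\to B$ (loops and multiple edges allowed). An evolution of length $m\ge 0$ is a sequence $A_0\leftarrow A_1\leftarrow\cdots\leftarrow A_m$ of vertices together with edges $A_k\to A_{k-1}$ ($1\le k\le m$); $A_0$ is its initial and $A_m$ its terminal vertex. Write $A\le B$ ($A$ is an ancestor of $B$) if there is an evolution with initial vertex $A$ and terminal vertex $B$; $A,B$ are isotypic ($A\sim B$) if $A\le B$ and $B\le A$. A vertex $A$ is primitive if every ancestor of $A$ is isotypic to $A$. A full evolution for $X$ is an evolution with primitive initial vertex and terminal vertex $X$. The height $h(X)$ is the smallest length of a full evolution for $X$ ($\infty$ if none). An evolution $\alpha=(A_0\leftarrow\cdots\leftarrow A_m)$ embeds in $\beta=(B_0\leftarrow\cdots\leftarrow B_n)$ if $m\le n$ and there are $0\le r_0<\cdots<r_m\le n$ with $A_k\sim B_{r_k}$. A universal evolution for $X$ is a full evolution for $X$ embedding in every full evolution for $X$; $X$ is phylogenetic if one exists. A quiver is monotonous if $h(A)\ge h(B)$ for every edge $A\to B$. *)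

theory Defs
  imports Main "HOL-Library.Extended_Nat"
begin

text \<open>A quiver on the vertex type 'v is given by edge sets E A B (edges A -> B).
An evolution A_0 <- A_1 <- ... <- A_m is a pair (As, es) of a vertex list As = [A_0,...,A_m]
and an edge list es = [e_1,...,e_m] with e_k an edge A_k -> A_(k-1).\<close>

definition evolution :: "('v \<Rightarrow> 'v \<Rightarrow> 'e set) \<Rightarrow> 'v list \<times> 'e list \<Rightarrow> bool" where
  "evolution E ev \<longleftrightarrow> (case ev of (As, es) \<Rightarrow>
     length As = Suc (length es) \<and>
     (\<forall>k. 1 \<le> k \<and> k \<le> length es \<longrightarrow> es ! (k - 1) \<in> E (As ! k) (As ! (k - 1))))"

definition ev_len :: "'v list \<times> 'e list \<Rightarrow> nat" where
  "ev_len ev = length (snd ev)"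

definition initial :: "'v list \<times> 'e list \<Rightarrow> 'v" where
  "initial ev = hd (fst ev)"

definition terminal :: "'v list \<times> 'e list \<Rightarrow> 'v" where
  "terminal ev = last (fst ev)"

definition ancestor :: "('v \<Rightarrow> 'v \<Rightarrow> 'e set) \<Rightarrow> 'v \<Rightarrow> 'v \<Rightarrow> bool" where
  "ancestor E A B \<longleftrightarrow> (\<exists>ev. evolution E ev \<and> initial ev = A \<and> terminal ev = B)"

definition isotypic :: "('v \<Rightarrow> 'v \<Rightarrow> 'e set) \<Rightarrow> 'v \<Rightarrow> 'v \<Rightarrow> bool" where
  "isotypic E A B \<longleftrightarrow> ancestor E A B \<and> ancestor E B A"

definition primitive :: "('v \<Rightarrow> 'v \<Rightarrow> 'e set) \<Rightarrow> 'v \<Rightarrow> bool" where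
  "primitive E A \<longleftrightarrow> (\<forall>B. ancestor E B A \<longrightarrow> isotypic E B A)"

definition full_evolution :: "('v \<Rightarrow> 'v \<Rightarrow> 'e set) \<Rightarrow> 'v \<Rightarrow> 'v list \<times> 'e list \<Rightarrow> bool" where
  "full_evolution E X ev \<longleftrightarrow> evolution E ev \<and> primitive E (initial ev) \<and> terminal ev = X"

definition height :: "('v \<Rightarrow> 'v \<Rightarrow> 'e set) \<Rightarrow> 'v \<Rightarrow> enat" where
  "height E X = (INF ev \<in> {ev. full_evolution E X ev}. enat (ev_len ev))"

definition embeds :: "('v \<Rightarrow> 'v \<Rightarrow> 'e set) \<Rightarrow> 'v list \<times> 'e list \<Rightarrow> 'v list \<times> 'e list \<Rightarrow> bool" where
  "embeds E \<alpha> \<beta> \<longleftrightarrow> ev_len \<alpha> \<le> ev_len \<beta> \<and>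
     (\<exists>r :: nat \<Rightarrow> nat. (\<forall>k < ev_len \<alpha>. r k < r (Suc k)) \<and> r (ev_len \<alpha>) \<le> ev_len \<beta> \<and>
        (\<forall>k \<le> ev_len \<alpha>. isotypic E (fst \<alpha> ! k) (fst \<beta> ! r k)))"

definition universal_evolution :: "('v \<Rightarrow> 'v \<Rightarrow> 'e set) \<Rightarrow> 'v \<Rightarrow> 'v list \<times> 'e list \<Rightarrow> bool" where
  "universal_evolution E X ev \<longleftrightarrow> full_evolution E X ev \<and>
     (\<forall>ev'. full_evolution E X ev' \<longrightarrow> embeds E ev ev')"

definition phylogenetic :: "('v \<Rightarrow> 'v \<Rightarrow> 'e set) \<Rightarrow> 'v \<Rightarrow> bool" where
  "phylogenetic E X \<longleftrightarrow> (\<exists>ev. universal_evolution E X ev)"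

definition monotonous :: "('v \<Rightarrow> 'v \<Rightarrow> 'e set) \<Rightarrow> bool" where
  "monotonous E \<longleftrightarrow> (\<forall>A B. E A B \<noteq> {} \<longrightarrow> height E A \<ge> height E B)"

end

theory Submission
  imports Defs
begin

text \<open>
Let \<open>U\<close> be a universal evolution for \<open>X\<close>. Embedding \<open>U\<close> into a shortest full evolution for \<open>X\<close>
shows that \<open>U\<close> is itself shortest, so its \<open>k\<close>-th vertex has height \<open>k\<close>. Given an ancestor \<open>A\<close> of \<open>X\<close>
of height \<open>a\<close>, every full evolution \<open>H\<close> for \<open>A\<close> extends along an evolution from \<open>A\<close> to \<open>X\<close> to a
full evolution for \<open>X\<close>, into which \<open>U\<close> embeds. By monotonicity all vertices past \<open>A\<close> have height
at least \<open>a\<close>, and isotypic vertices have equal height, so the first \<open>a\<close> vertices of \<open>U\<close> land in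
\<open>H\<close>. Applied to a shortest full evolution for \<open>A\<close>, whose \<open>k\<close>-th vertex also has height \<open>k\<close>, this
identifies its first \<open>a\<close> vertices with those of \<open>U\<close> up to isotypy; hence it embeds into every
full evolution for \<open>A\<close> and is universal.
\<close>

lemma all_Suc_ivl_conv: "(\<forall>k. 1 \<le> k \<and> k \<le> n \<longrightarrow> P k) \<longleftrightarrow> (\<forall>k<n. P (Suc k))"
proof
  assume "\<forall>k<n. P (Suc k)"
  then show "\<forall>k. 1 \<le> k \<and> k \<le> n \<longrightarrow> P k"
    by (metis Suc_le_eq Suc_pred' One_nat_def)
qed auto

lemma evolution_iff:
  "evolution E ev \<longleftrightarrow> length (fst ev) = Suc (length (snd ev)) \<and>
     (\<forall>k<length (snd ev). snd ev ! k \<in> E (fst ev ! Suc k) (fst ev ! k))"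
  unfolding evolution_def all_Suc_ivl_conv by (simp split: prod.split)

lemma length_fst_evolution: "evolution E ev \<Longrightarrow> length (fst ev) = Suc (ev_len ev)"
  by (simp add: evolution_iff ev_len_def)

lemma evolution_edge:
  "evolution E ev \<Longrightarrow> k < ev_len ev \<Longrightarrow> snd ev ! k \<in> E (fst ev ! Suc k) (fst ev ! k)"
  by (simp add: evolution_iff ev_len_def)

lemma initial_eq_nth: "evolution E ev \<Longrightarrow> initial ev = fst ev ! 0"
  unfolding initial_def by (metis length_fst_evolution hd_conv_nth list.size(3) nat.distinct(1))

lemma terminal_eq_nth: "evolution E ev \<Longrightarrow> terminal ev = fst ev ! ev_len ev"
  unfolding terminal_def by (metis length_fst_evolution last_conv_nth list.size(3) nat.distinct(1) diff_Suc_1)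

subsection \<open>Concatenation, prefixes and suffixes of evolutions\<close>

definition ev_append :: "'v list \<times> 'e list \<Rightarrow> 'v list \<times> 'e list \<Rightarrow> 'v list \<times> 'e list" where
  "ev_append a b = (fst a @ tl (fst b), snd a @ snd b)"

lemma ev_len_ev_append [simp]: "ev_len (ev_append a b) = ev_len a + ev_len b"
  by (simp add: ev_append_def ev_len_def)

lemma nth_ev_append_left:
  assumes a: "evolution E a" and i: "i \<le> ev_len a"
  shows "fst (ev_append a b) ! i = fst a ! i"
  using i length_fst_evolution[OF a] by (simp add: ev_append_def nth_append)

lemma nth_ev_append_right:
  assumes a: "evolution E a" and b: "evolution E b" and ab: "terminal a = initial b"
    and i: "ev_len a \<le> i" "i \<le> ev_len a + ev_len b"
  shows "fst (ev_append a b) ! i = fst b ! (i - ev_len a)"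
proof (cases "i = ev_len a")
  case True
  then show ?thesis
    using nth_ev_append_left[OF a] ab terminal_eq_nth[OF a] initial_eq_nth[OF b] by simp
next
  case False
  then have "i - Suc (ev_len a) < length (tl (fst b))"
    using i length_fst_evolution[OF b] by simp
  then have "tl (fst b) ! (i - Suc (ev_len a)) = fst b ! (i - ev_len a)"
    using False i by (simp add: nth_tl Suc_diff_Suc)
  then show ?thesis
    using False i length_fst_evolution[OF a] by (simp add: ev_append_def nth_append)
qed

lemma evolution_ev_append:
  assumes a: "evolution E a" and b: "evolution E b" and ab: "terminal a = initial b"
  shows "evolution E (ev_append a b)"
  unfolding evolution_iff
proof (intro conjI allI impI)
  show "length (fst (ev_append a b)) = Suc (length (snd (ev_append a b)))"
    using length_fst_evolution[OF a] length_fst_evolution[OF b]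
    by (simp add: ev_append_def ev_len_def)
next
  fix k assume "k < length (snd (ev_append a b))"
  then have k: "k < ev_len a + ev_len b"
    by (metis ev_len_def ev_len_ev_append)
  show "snd (ev_append a b) ! k \<in> E (fst (ev_append a b) ! Suc k) (fst (ev_append a b) ! k)"
  proof (cases "k < ev_len a")
    case True
    then show ?thesis
      using evolution_edge[OF a True] nth_ev_append_left[OF a, of k] nth_ev_append_left[OF a, of "Suc k"]
      by (simp add: ev_append_def nth_append ev_len_def)
  next
    case False
    then have "k - ev_len a < ev_len b" using k by simp
    from evolution_edge[OF b this] show ?thesis
      using nth_ev_append_right[OF a b ab, of k] nth_ev_append_right[OF a b ab, of "Suc k"] k False
      by (simp add: ev_append_def nth_append ev_len_def Suc_diff_le)
  qed
qed

lemma initial_ev_append: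
  "evolution E a \<Longrightarrow> initial (ev_append a b) = initial a"
  by (metis initial_def ev_append_def fst_conv hd_append length_fst_evolution list.size(3) nat.distinct(1))

lemma terminal_ev_append:
  assumes a: "evolution E a" and b: "evolution E b" and ab: "terminal a = initial b"
  shows "terminal (ev_append a b) = terminal b"
  using terminal_eq_nth[OF evolution_ev_append[OF a b ab]] terminal_eq_nth[OF b]
    nth_ev_append_right[OF a b ab, of "ev_len a + ev_len b"] by simp

definition ev_take :: "nat \<Rightarrow> 'v list \<times> 'e list \<Rightarrow> 'v list \<times> 'e list" where
  "ev_take k ev = (take (Suc k) (fst ev), take k (snd ev))"

definition ev_drop :: "nat \<Rightarrow> 'v list \<times> 'e list \<Rightarrow> 'v list \<times> 'e list" where
  "ev_drop k ev = (drop k (fst ev), drop k (snd ev))"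

lemma ev_take:
  assumes ev: "evolution E ev" and k: "k \<le> ev_len ev"
  shows "evolution E (ev_take k ev)" "initial (ev_take k ev) = initial ev"
    "terminal (ev_take k ev) = fst ev ! k" "ev_len (ev_take k ev) = k"
proof -
  note l = length_fst_evolution[OF ev]
  show e: "evolution E (ev_take k ev)"
    using ev k l unfolding evolution_iff ev_take_def ev_len_def by (auto simp: min_def)
  show "ev_len (ev_take k ev) = k"
    using k by (simp add: ev_take_def ev_len_def)
  then show "terminal (ev_take k ev) = fst ev ! k"
    using terminal_eq_nth[OF e] by (simp add: ev_take_def)
  show "initial (ev_take k ev) = initial ev"
    using initial_eq_nth[OF e] initial_eq_nth[OF ev] by (simp add: ev_take_def)
qed

lemma ev_drop:
  assumes ev: "evolution E ev" and k: "k \<le> ev_len ev"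
  shows "evolution E (ev_drop k ev)" "initial (ev_drop k ev) = fst ev ! k"
    "terminal (ev_drop k ev) = terminal ev" "ev_len (ev_drop k ev) = ev_len ev - k"
proof -
  note l = length_fst_evolution[OF ev]
  show e: "evolution E (ev_drop k ev)"
    using ev k l unfolding evolution_iff ev_drop_def ev_len_def by auto
  show "ev_len (ev_drop k ev) = ev_len ev - k"
    by (simp add: ev_drop_def ev_len_def)
  show "initial (ev_drop k ev) = fst ev ! k"
    using initial_eq_nth[OF e] k l by (simp add: ev_drop_def)
  show "terminal (ev_drop k ev) = terminal ev"
    using k l by (simp add: terminal_def ev_drop_def last_drop)
qed

lemma ancestor_refl: "ancestor E A A"
  unfolding ancestor_def
  by (rule exI[of _ "([A], [])"]) (simp add: evolution_iff initial_def terminal_def)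

lemma ancestor_trans: "ancestor E A B \<Longrightarrow> ancestor E B C \<Longrightarrow> ancestor E A C"
  unfolding ancestor_def
  by (metis evolution_ev_append initial_ev_append terminal_ev_append)

lemma isotypic_refl: "isotypic E A A"
  by (simp add: isotypic_def ancestor_refl)

lemma isotypic_sym: "isotypic E A B \<Longrightarrow> isotypic E B A"
  unfolding isotypic_def by blast

lemma isotypic_trans: "isotypic E A B \<Longrightarrow> isotypic E B C \<Longrightarrow> isotypic E A C"
  unfolding isotypic_def by (blast intro: ancestor_trans)

lemma height_le_ev_len: "full_evolution E X ev \<Longrightarrow> height E X \<le> enat (ev_len ev)"
  unfolding height_def by (rule INF_lower) simp

lemma height_attained:
  assumes "height E X = enat n"
  obtains ev where "full_evolution E X ev" "ev_len ev = n"
proof -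
  define S where "S = (\<lambda>ev. enat (ev_len ev)) ` {ev. full_evolution E X ev}"
  have "Inf S = enat n" using assms by (simp add: height_def S_def)
  then have "S \<noteq> {}" and "Inf S = (LEAST x. x \<in> S)"
    by (auto simp: Inf_enat_def split: if_splits)
  then have "Inf S \<in> S" by (metis LeastI ex_in_conv)
  with \<open>Inf S = enat n\<close> show ?thesis
    using that unfolding S_def by auto
qed

lemma height_terminal_le:
  assumes ev: "evolution E ev"
  shows "height E (terminal ev) \<le> height E (initial ev) + enat (ev_len ev)"
proof (cases "height E (initial ev)")
  case (enat n)
  then obtain M where M: "full_evolution E (initial ev) M" "ev_len M = n"
    by (rule height_attained)
  then have Me: "evolution E M" "terminal M = initial ev"
    by (auto simp: full_evolution_def)
  have "full_evolution E (terminal ev) (ev_append M ev)"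
    using M(1) evolution_ev_append[OF Me(1) ev Me(2)] initial_ev_append[OF Me(1)]
      terminal_ev_append[OF Me(1) ev Me(2)] by (simp add: full_evolution_def)
  then have "height E (terminal ev) \<le> enat (ev_len M + ev_len ev)"
    using height_le_ev_len by fastforce
  then show ?thesis using M(2) enat by simp
qed simp

lemma height_nth_shortest_full_evolution:
  assumes M: "full_evolution E X M" and h: "height E X = enat (ev_len M)" and k: "k \<le> ev_len M"
  shows "height E (fst M ! k) = enat k"
proof -
  have ev: "evolution E M" using M by (simp add: full_evolution_def)
  have "full_evolution E (fst M ! k) (ev_take k M)"
    using ev_take[OF ev k] M by (simp add: full_evolution_def)
  then have upper: "height E (fst M ! k) \<le> enat k"
    using height_le_ev_len ev_take(4)[OF ev k] by metis
  have "enat (ev_len M) \<le> height E (fst M ! k) + enat (ev_len M - k)"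
    using height_terminal_le[OF ev_drop(1)[OF ev k]] ev_drop[OF ev k] M h
    by (simp add: full_evolution_def)
  then show ?thesis using upper k
    by (cases "height E (fst M ! k)") auto
qed

lemma universal_evolution_height:
  assumes U: "universal_evolution E X U"
  shows "height E X = enat (ev_len U)"
proof -
  have full: "full_evolution E X U" using U by (simp add: universal_evolution_def)
  then obtain n where n: "height E X = enat n"
    using height_le_ev_len by (metis enat_ile)
  then obtain M where "full_evolution E X M" "ev_len M = n"
    by (rule height_attained)
  then have "ev_len U \<le> n"
    using U unfolding universal_evolution_def embeds_def by blast
  then show ?thesis using n height_le_ev_len[OF full] by simp
qed

lemma universal_evolution_nth_height:
  assumes "universal_evolution E X U" and "k \<le> ev_len U"
  shows "height E (fst U ! k) = enat k"
  using assms height_nth_shortest_full_evolution universal_evolution_height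
  by (metis universal_evolution_def)

subsection \<open>Heights in monotonous quivers\<close>

lemma height_initial_le_nth:
  assumes m: "monotonous E" and ev: "evolution E ev"
  shows "j \<le> ev_len ev \<Longrightarrow> height E (initial ev) \<le> height E (fst ev ! j)"
proof (induction j)
  case 0 then show ?case by (simp add: initial_eq_nth[OF ev])
next
  case (Suc j)
  then have "height E (fst ev ! j) \<le> height E (fst ev ! Suc j)"
    using m evolution_edge[OF ev] unfolding monotonous_def by (metis Suc_le_lessD empty_iff)
  then show ?case using Suc by simp
qed

lemma ancestor_height_le: "monotonous E \<Longrightarrow> ancestor E A B \<Longrightarrow> height E A \<le> height E B"
  unfolding ancestor_def by (metis height_initial_le_nth terminal_eq_nth order_refl)

lemma isotypic_height_eq: "monotonous E \<Longrightarrow> isotypic E A B \<Longrightarrow> height E A = height E B"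
  unfolding isotypic_def by (simp add: ancestor_height_le antisym)

subsection \<open>Universality of shortest full evolutions\<close>

lemma embeds_if_embeds_butlast:
  assumes "\<forall>k. Suc k < ev_len \<alpha> \<longrightarrow> r k < r (Suc k)"
    and "\<forall>k < ev_len \<alpha>. r k < ev_len \<beta> \<and> isotypic E (fst \<alpha> ! k) (fst \<beta> ! r k)"
    and "isotypic E (fst \<alpha> ! ev_len \<alpha>) (fst \<beta> ! ev_len \<beta>)"
  shows "embeds E \<alpha> \<beta>"
proof -
  define r' where "r' k = (if k < ev_len \<alpha> then r k else ev_len \<beta>)" for k
  have "k \<le> r k" if "k < ev_len \<alpha>" for k
    using that by (induction k) (use assms(1) in \<open>auto simp: Suc_le_eq\<close>)
  then have "ev_len \<alpha> \<le> ev_len \<beta>"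
    using assms(2) by (cases "ev_len \<alpha>") fastforce+
  moreover have "\<forall>k < ev_len \<alpha>. r' k < r' (Suc k)"
    using assms(1,2) by (auto simp: r'_def not_less_eq)
  moreover have "\<forall>k \<le> ev_len \<alpha>. isotypic E (fst \<alpha> ! k) (fst \<beta> ! r' k)"
    using assms(2,3) by (auto simp: r'_def le_less)
  ultimately show ?thesis
    unfolding embeds_def by (intro conjI exI[of _ r']) (auto simp: r'_def)
qed

lemma universal_evolution_prefix_embeds:
  assumes m: "monotonous E" and U: "universal_evolution E X U" and AX: "ancestor E A X"
    and a: "height E A = enat a" and H: "full_evolution E A H"
  obtains r where "\<forall>k. Suc k < a \<longrightarrow> r k < r (Suc k)"
    and "\<forall>k < a. r k < ev_len H \<and> isotypic E (fst U ! k) (fst H ! r k)"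
proof -
  obtain Bv where Bv: "evolution E Bv" "initial Bv = A" "terminal Bv = X"
    using AX by (auto simp: ancestor_def)
  have He: "evolution E H" "terminal H = initial Bv"
    using H Bv(2) by (auto simp: full_evolution_def)
  define G where "G = ev_append H Bv"
  have "full_evolution E X G"
    using H Bv evolution_ev_append[OF He(1) Bv(1) He(2)] initial_ev_append[OF He(1)]
      terminal_ev_append[OF He(1) Bv(1) He(2)] by (simp add: full_evolution_def G_def)
  then obtain r where r: "\<forall>k < ev_len U. r k < r (Suc k)" "r (ev_len U) \<le> ev_len G"
      "\<forall>k \<le> ev_len U. isotypic E (fst U ! k) (fst G ! r k)"
    using U unfolding universal_evolution_def embeds_def by blast
  have aU: "a \<le> ev_len U"
    using ancestor_height_le[OF m AX] a universal_evolution_height[OF U] by simp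
  have lands_in_H: "r k < ev_len H \<and> isotypic E (fst U ! k) (fst H ! r k)" if k: "k < a" for k
  proof -
    have "r k \<le> r (ev_len U)"
      by (rule lift_Suc_mono_le_ivl[of "{..<ev_len U}"]) (use r(1) k aU in auto)
    then have rk: "r k \<le> ev_len H + ev_len Bv"
      using r(2) by (simp add: G_def)
    have iso: "isotypic E (fst U ! k) (fst G ! r k)"
      using r(3) k aU by simp
    then have "height E (fst G ! r k) = enat k"
      using isotypic_height_eq[OF m] universal_evolution_nth_height[OF U, of k] k aU by simp
    moreover have "enat a \<le> height E (fst G ! r k)" if "\<not> r k < ev_len H"
      using that rk nth_ev_append_right[OF He(1) Bv(1) He(2), of "r k"] a Bv(2)
        height_initial_le_nth[OF m Bv(1), of "r k - ev_len H"] by (simp add: G_def)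
    ultimately have "r k < ev_len H"
      using k by fastforce
    then show ?thesis
      using iso nth_ev_append_left[OF He(1), of "r k"] by (simp add: G_def)
  qed
  show ?thesis
    by (rule that[of r]) (use r(1) aU lands_in_H in auto)
qed

lemma shortest_full_evolution_nth_isotypic:
  assumes m: "monotonous E" and U: "universal_evolution E X U" and AX: "ancestor E A X"
    and F: "full_evolution E A F" "height E A = enat (ev_len F)" and k: "k < ev_len F"
  shows "isotypic E (fst F ! k) (fst U ! k)"
proof -
  obtain r where "\<forall>k. Suc k < ev_len F \<longrightarrow> r k < r (Suc k)"
    and r: "\<forall>k < ev_len F. r k < ev_len F \<and> isotypic E (fst U ! k) (fst F ! r k)"
    by (rule universal_evolution_prefix_embeds[OF m U AX F(2) F(1)])
  have iso: "isotypic E (fst U ! k) (fst F ! r k)" and rk: "r k < ev_len F"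
    using r k by auto
  have "ev_len F \<le> ev_len U"
    using ancestor_height_le[OF m AX] F(2) universal_evolution_height[OF U] by simp
  then have "height E (fst F ! r k) = enat k"
    using isotypic_height_eq[OF m iso] universal_evolution_nth_height[OF U, of k] k by simp
  then have "r k = k"
    using height_nth_shortest_full_evolution[OF F(1,2)] rk by simp
  then show ?thesis
    using isotypic_sym[OF iso] by simp
qed

theorem corollary6p2:
  fixes E :: "'v \<Rightarrow> 'v \<Rightarrow> 'e set"
  assumes "monotonous E"
    and "phylogenetic E X"
    and "ancestor E A X"
  shows "phylogenetic E A"
proof -
  obtain U where U: "universal_evolution E X U"
    using assms(2) by (auto simp: phylogenetic_def)
  obtain a where "height E A = enat a"
    using ancestor_height_le[OF assms(1,3)] universal_evolution_height[OF U] by (metis enat_ile)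
  then obtain F where F: "full_evolution E A F" "height E A = enat (ev_len F)"
    by (metis height_attained)
  have "embeds E F H" if H: "full_evolution E A H" for H
  proof -
    obtain r where r: "\<forall>k. Suc k < ev_len F \<longrightarrow> r k < r (Suc k)"
        "\<forall>k < ev_len F. r k < ev_len H \<and> isotypic E (fst U ! k) (fst H ! r k)"
      by (rule universal_evolution_prefix_embeds[OF assms(1) U assms(3) F(2) H])
    have "fst F ! ev_len F = fst H ! ev_len H"
      using F(1) H by (auto simp: full_evolution_def terminal_eq_nth[symmetric])
    then show ?thesis
      using r shortest_full_evolution_nth_isotypic[OF assms(1) U assms(3) F]
      by (intro embeds_if_embeds_butlast) (auto intro: isotypic_trans isotypic_refl)
  qed
  then show ?thesis
    using F(1) unfolding phylogenetic_def universal_evolution_def by blast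
qed

end
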